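(* Let $n\ge2$, fix a lattice $\mathbb{Z}+\mathbb{Z}\tau$ ($\operatorname{Im}\tau>0$) with Weierstrass function $\wp$, and fix $\lambda_1,\dots,\lambda_n\in\mathbb{C}$ with $\lambda_i-\lambda_j\notin\mathbb{Z}+\mathbb{Z}\tau$ for $i\ne j$. In the algebra $\mathcal{A}$ described in the context, the Dunkl elements $\theta_i=\sum_{j\ne i}[ij]$, $i=1,\dots,n$, commute pairwise.
   Context: Write $x_1,\dots,x_n$ for the coordinates on $\mathbb{C}^n$, $x_{ij}=x_i-x_j$, $\lambda_{ij}=\lambda_i-\lambda_j$, and let $\mathcal{M}$ be the field of meromorphic functions on $\mathbb{C}^n$; for $i\ne j$ let $s_{ij}$ act on $\mathcal{M}$ by $(s_{ij}f)(x)=f(x')$ where $x'$ is $x$ with coordinates $x_i,x_j$ interchanged. The algebra $\mathcal{A}$ is the $\mathbb{C}$-algebra generated by $\mathcal{M}$ and symbols $[ij]$, $1\le i\ne j\le n$, with $[ji]=-[ij]$, subject to: (i) $[ij]^2=\wp(\lambda_{ij})-\wp(x_{ij})$; (ii) $[ij][kl]=[kl][ij]$ if $\{i,j\}\cap\{k,l\}=\emptyset$; (iii) $[ij][jk]+[jk][ki]+[ki][ij]=0$ for distinct $i,j,k$; (iv) $[ij]f=(s_{ij}f)[ij]$ for $f\in\mathcal{M}$. *)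

theory Defs
  imports "HOL-Analysis.Analysis"
begin

definition lattice :: "complex \<Rightarrow> complex set" where
  "lattice \<tau> = {of_int a + of_int b * \<tau> | a b. True}"

definition wp :: "complex \<Rightarrow> complex \<Rightarrow> complex" where
  "wp \<tau> z = 1 / z\<^sup>2 + (\<Sum>\<^sub>\<infinity>\<omega>\<in>lattice \<tau> - {0}. 1 / (z - \<omega>)\<^sup>2 - 1 / \<omega>\<^sup>2)"

definition holo_n :: "(complex^'n \<Rightarrow> complex) \<Rightarrow> (complex^'n) set \<Rightarrow> bool" where
  "holo_n f U \<longleftrightarrow> open U \<and>
     (\<forall>z\<in>U. \<exists>D. (f has_derivative D) (at z) \<and> (\<forall>c v. D (c *s v) = c * D v))"

text \<open>A function C^n -> C represents a meromorphic function on C^n if, off a closed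
  nowhere dense set P (containing the polar/indeterminacy locus, where the value is
  irrelevant), it is locally a quotient g/h of holomorphic functions with h not
  identically zero on a connected neighbourhood.\<close>
definition mero_n :: "(complex^'n \<Rightarrow> complex) \<Rightarrow> bool" where
  "mero_n f \<longleftrightarrow> (\<exists>P. closed P \<and> interior P = {} \<and>
     (\<forall>z. \<exists>U g h. z \<in> U \<and> connected U \<and> holo_n g U \<and> holo_n h U \<and>
          (\<forall>w\<in>U - P. h w \<noteq> 0 \<and> f w = g w / h w)))"

definition mero_eq :: "(complex^'n \<Rightarrow> complex) \<Rightarrow> (complex^'n \<Rightarrow> complex) \<Rightarrow> bool" where
  "mero_eq f g \<longleftrightarrow> (\<exists>P. closed P \<and> interior P = {} \<and> (\<forall>w. w \<notin> P \<longrightarrow> f w = g w))"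

definition swap_coords :: "'n \<Rightarrow> 'n \<Rightarrow> complex^'n \<Rightarrow> complex^'n" where
  "swap_coords i j x = (\<chi> k. x $ (Fun.swap i j id k))"

definition s_act :: "'n \<Rightarrow> 'n \<Rightarrow> (complex^'n \<Rightarrow> complex) \<Rightarrow> (complex^'n \<Rightarrow> complex)" where
  "s_act i j f = (\<lambda>x. f (swap_coords i j x))"

text \<open>The algebra A is the C-algebra generated by M and symbols [ij] subject to the
  relations (i)-(iv). A statement "elements commute in A" is equivalent (A being the
  universal such algebra) to: in every ring R with a ring homomorphism phi : M -> R
  and elements b i j satisfying the relations, the images commute.
  M is represented by meromorphic representatives with pointwise operations, phi
  respecting equality of meromorphic functions.\<close>
definition A_rep ::
  "complex \<Rightarrow> ('n \<Rightarrow> complex) \<Rightarrow> ((complex^'n \<Rightarrow> complex) \<Rightarrow> 'r::ring_1)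
     \<Rightarrow> ('n \<Rightarrow> 'n \<Rightarrow> 'r) \<Rightarrow> bool" where
  "A_rep \<tau> lam \<phi> b \<longleftrightarrow>
     (\<forall>f g. mero_n f \<longrightarrow> mero_n g \<longrightarrow> mero_eq f g \<longrightarrow> \<phi> f = \<phi> g) \<and>
     (\<forall>f g. mero_n f \<longrightarrow> mero_n g \<longrightarrow> \<phi> (\<lambda>x. f x + g x) = \<phi> f + \<phi> g) \<and>
     (\<forall>f g. mero_n f \<longrightarrow> mero_n g \<longrightarrow> \<phi> (\<lambda>x. f x * g x) = \<phi> f * \<phi> g) \<and>
     \<phi> (\<lambda>x. 1) = 1 \<and>
     (\<forall>i j. i \<noteq> j \<longrightarrow> b j i = - b i j) \<and>
     (\<forall>i j. i \<noteq> j \<longrightarrow>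
        b i j * b i j = \<phi> (\<lambda>x. wp \<tau> (lam i - lam j) - wp \<tau> (x $ i - x $ j))) \<and>
     (\<forall>i j k l. i \<noteq> j \<longrightarrow> k \<noteq> l \<longrightarrow> {i, j} \<inter> {k, l} = {} \<longrightarrow>
        b i j * b k l = b k l * b i j) \<and>
     (\<forall>i j k. i \<noteq> j \<longrightarrow> j \<noteq> k \<longrightarrow> i \<noteq> k \<longrightarrow>
        b i j * b j k + b j k * b k i + b k i * b i j = 0) \<and>
     (\<forall>i j f. i \<noteq> j \<longrightarrow> mero_n f \<longrightarrow> b i j * \<phi> f = \<phi> (s_act i j f) * b i j)"

definition dunkl :: "('n::finite \<Rightarrow> 'n \<Rightarrow> 'r::ring_1) \<Rightarrow> 'n \<Rightarrow> 'r" where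
  "dunkl b i = (\<Sum>j\<in>UNIV - {i}. b i j)"

end

theory Submission
  imports Defs
begin

text \<open>Only antisymmetry and relations (ii) and (iii) are needed: expanding the commutator
  of two Dunkl elements, the terms with disjoint index pairs cancel by (ii), and the
  remaining ones group into triples indexed by a third index m, each of which vanishes
  by two instances of (iii).\<close>

lemma triangle_commutators_cancel:
  fixes b :: "'n \<Rightarrow> 'n \<Rightarrow> 'r::ring_1"
  assumes anti: "\<And>i j. i \<noteq> j \<Longrightarrow> b j i = - b i j"
    and tri: "\<And>i j k. i \<noteq> j \<Longrightarrow> j \<noteq> k \<Longrightarrow> i \<noteq> k \<Longrightarrow>
        b i j * b j k + b j k * b k i + b k i * b i j = 0"
    and distinct: "i \<noteq> j" "m \<noteq> i" "m \<noteq> j"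
  shows "(b i j * b j m - b j m * b i j) + (b i m * b j i - b j i * b i m)
         + (b i m * b j m - b j m * b i m) = 0"
proof -
  have mi: "b m i = - b i m" and mj: "b m j = - b j m" and ji: "b j i = - b i j"
    using anti[of i m] anti[of j m] anti[of i j] distinct by auto
  have "b i j * b j m + b j m * b m i + b m i * b i j = 0"
    using tri[of i j m] distinct by simp
  then have "b i j * b j m = - (b j m * b m i + b m i * b i j)"
    unfolding eq_neg_iff_add_eq_0 by (simp only: add.assoc)
  then have ijm: "b i j * b j m = b j m * b i m + b i m * b i j"
    unfolding mi by simp
  have "b j i * b i m + b i m * b m j + b m j * b j i = 0"
    using tri[of j i m] distinct by simp
  then have "b j i * b i m = - (b i m * b m j + b m j * b j i)"
    unfolding eq_neg_iff_add_eq_0 by (simp only: add.assoc)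
  then have jim: "b j i * b i m = b i m * b j m - b j m * b i j"
    unfolding mj ji by simp
  show ?thesis
    unfolding ijm jim unfolding ji by (simp add: algebra_simps)
qed

lemma dunkl_commute:
  fixes b :: "'n::finite \<Rightarrow> 'n \<Rightarrow> 'r::ring_1"
  assumes anti: "\<And>i j. i \<noteq> j \<Longrightarrow> b j i = - b i j"
    and disjoint_commute: "\<And>i j k l. i \<noteq> j \<Longrightarrow> k \<noteq> l \<Longrightarrow> {i, j} \<inter> {k, l} = {} \<Longrightarrow>
        b i j * b k l = b k l * b i j"
    and tri: "\<And>i j k. i \<noteq> j \<Longrightarrow> j \<noteq> k \<Longrightarrow> i \<noteq> k \<Longrightarrow>
        b i j * b j k + b j k * b k i + b k i * b i j = 0"
  shows "dunkl b i * dunkl b j = dunkl b j * dunkl b i"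
proof (cases "i = j")
  case True
  then show ?thesis by simp
next
  case ij: False
  define c where "c k l = b i k * b j l - b j l * b i k" for k l
  have "dunkl b i * dunkl b j - dunkl b j * dunkl b i
      = (\<Sum>k\<in>UNIV-{i}. \<Sum>l\<in>UNIV-{j}. c k l)"
    unfolding dunkl_def sum_product c_def
    by (subst (2) sum.swap) (simp add: sum_subtractf)
  also have "\<dots> = (\<Sum>l\<in>UNIV-{j}. c j l) + (\<Sum>k\<in>UNIV-{i}-{j}. \<Sum>l\<in>UNIV-{j}. c k l)"
    by (subst sum.remove[of _ j]) (use ij in auto)
  also have "(\<Sum>l\<in>UNIV-{j}. c j l) = (\<Sum>m\<in>UNIV-{i}-{j}. c j m)"
  proof -
    have "c j i = 0"
      unfolding c_def using anti[OF ij] by simp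
    then show ?thesis
      by (subst sum.remove[of _ i]) (use ij in \<open>auto intro: sum.cong\<close>)
  qed
  also have "(\<Sum>k\<in>UNIV-{i}-{j}. \<Sum>l\<in>UNIV-{j}. c k l) = (\<Sum>m\<in>UNIV-{i}-{j}. c m i + c m m)"
  proof (rule sum.cong)
    fix k assume k: "k \<in> UNIV-{i}-{j}"
    have "c k l = 0" if "l \<noteq> j" "l \<noteq> i" "l \<noteq> k" for l
      unfolding c_def using disjoint_commute[of i k j l] that k ij by auto
    then have "(\<Sum>l\<in>UNIV-{j}. c k l) = (\<Sum>l\<in>{i,k}. c k l)"
      by (intro sum.mono_neutral_right) (use k ij in auto)
    then show "(\<Sum>l\<in>UNIV-{j}. c k l) = c k i + c k k"
      using k by auto
  qed simp
  also have "(\<Sum>m\<in>UNIV-{i}-{j}. c j m) + (\<Sum>m\<in>UNIV-{i}-{j}. c m i + c m m) = 0"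
    unfolding sum.distrib[symmetric] add.assoc[symmetric]
  proof (intro sum.neutral ballI)
    fix m assume "m \<in> UNIV-{i}-{j}"
    then show "c j m + c m i + c m m = 0"
      unfolding c_def using triangle_commutators_cancel[OF anti tri ij, where m=m] by auto
  qed
  finally show ?thesis
    by simp
qed

theorem proposition3p1:
  fixes \<tau> :: complex and lam :: "'n::finite \<Rightarrow> complex"
    and \<phi> :: "(complex^'n \<Rightarrow> complex) \<Rightarrow> 'r::ring_1" and b :: "'n \<Rightarrow> 'n \<Rightarrow> 'r"
  assumes "CARD('n) \<ge> 2"
    and "Im \<tau> > 0"
    and "\<And>i j. i \<noteq> j \<Longrightarrow> lam i - lam j \<notin> lattice \<tau>"
    and "A_rep \<tau> lam \<phi> b"
  shows "\<forall>i j. dunkl b i * dunkl b j = dunkl b j * dunkl b i"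
proof (intro allI)
  fix i j :: 'n
  note relations = \<open>A_rep \<tau> lam \<phi> b\<close>[unfolded A_rep_def]
  have anti: "\<And>i j. i \<noteq> j \<Longrightarrow> b j i = - b i j"
    using relations by blast
  have disjoint_commute: "\<And>i j k l. i \<noteq> j \<Longrightarrow> k \<noteq> l \<Longrightarrow> {i, j} \<inter> {k, l} = {} \<Longrightarrow>
      b i j * b k l = b k l * b i j"
    using relations by blast
  have tri: "\<And>i j k. i \<noteq> j \<Longrightarrow> j \<noteq> k \<Longrightarrow> i \<noteq> k \<Longrightarrow>
      b i j * b j k + b j k * b k i + b k i * b i j = 0"
    using relations by blast
  show "dunkl b i * dunkl b j = dunkl b j * dunkl b i"
    using dunkl_commute[OF anti disjoint_commute tri] .
qed

end
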